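(* Let $(V,d,k,q)$ be an instance of the individually fair $k$-center with outliers problem (IF$k$CO) as defined in the context. Then the basic algorithm (Algorithm 2) described in the context outputs a feasible solution $(S,O,\sigma)$ for this instance, i.e. $|S|\le k$ and $|O|\le q$.
   Context: IF$k$CO instance: a finite set $V$ with $|V|=n$, a metric $d$ on $V$ (nonnegative, symmetric, $d_{ii}=0$, triangle inequality), and integers $k\ge 1$ and $q\ge 0$. For $i\in V$, $NR_q(i)$ is the distance from $i$ to its $\lceil (n-q)/k\rceil$-th nearest neighbor in $V$, where $i$ counts as its own (first) nearest neighbor. A solution is $(S,O,\sigma)$ with $S,O\subseteq V$ and $\sigma:V\setminus O\to S$; feasible if $|S|\le k$ and $|O|\le q$. Algorithm 2: set $P:=V$, $S:=\emptyset$. While $P\neq\emptyset$ and $|S|<k$: pick $s\in P$ minimizing $NR_q(i)$ over $i\in P$; set $S:=S\cup\{s\}$ and $P:=\{i\in P: d_{is}>2\,NR_q(i)\}$. Then set $O:=P$ and, for each $i\in V\setminus O$, let $\sigma(i)$ be a center $h\in S$ minimizing $d_{ih}$. Output $(S,O,\sigma)$. *)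

theory Defs
  imports Complex_Main "HOL-Library.Multiset"
begin

definition is_metric_on :: "'a set \<Rightarrow> ('a \<Rightarrow> 'a \<Rightarrow> real) \<Rightarrow> bool" where
  "is_metric_on V d \<longleftrightarrow>
     (\<forall>i\<in>V. \<forall>j\<in>V. d i j \<ge> 0) \<and>
     (\<forall>i\<in>V. \<forall>j\<in>V. d i j = d j i) \<and>
     (\<forall>i\<in>V. d i i = 0) \<and>
     (\<forall>i\<in>V. \<forall>j\<in>V. \<forall>l\<in>V. d i l \<le> d i j + d j l)"

definition nr_rank :: "'a set \<Rightarrow> nat \<Rightarrow> nat \<Rightarrow> nat" where
  "nr_rank V k q = nat \<lceil>(real (card V) - real q) / real k\<rceil>"

text \<open>NR_q(i): distance from i to its m-th nearest neighbour in V (i itself counts,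
  as it has distance 0); i.e. the m-th smallest element of the multiset of distances.
  (Convention: if m = 0, which only happens when q \<ge> n, the first entry is used.)\<close>
definition NR :: "'a set \<Rightarrow> ('a \<Rightarrow> 'a \<Rightarrow> real) \<Rightarrow> nat \<Rightarrow> nat \<Rightarrow> 'a \<Rightarrow> real" where
  "NR V d k q i =
     sorted_list_of_multiset (image_mset (d i) (mset_set V)) ! (nr_rank V k q - 1)"

definition alg2_step :: "'a set \<Rightarrow> ('a \<Rightarrow> 'a \<Rightarrow> real) \<Rightarrow> nat \<Rightarrow> nat \<Rightarrow>
    'a set \<times> 'a set \<Rightarrow> 'a set \<times> 'a set \<Rightarrow> bool" where
  "alg2_step V d k q st st' \<longleftrightarrow>
     (let P = fst st; S = snd st in
      P \<noteq> {} \<and> card S < k \<and>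
      (\<exists>s\<in>P. (\<forall>i\<in>P. NR V d k q s \<le> NR V d k q i) \<and>
             st' = ({i\<in>P. d i s > 2 * NR V d k q i}, insert s S)))"

text \<open>(S, O, sigma) is a possible output of Algorithm 2 (for some choice of tie-breaking).\<close>
definition alg2_output :: "'a set \<Rightarrow> ('a \<Rightarrow> 'a \<Rightarrow> real) \<Rightarrow> nat \<Rightarrow> nat \<Rightarrow>
    'a set \<Rightarrow> 'a set \<Rightarrow> ('a \<Rightarrow> 'a) \<Rightarrow> bool" where
  "alg2_output V d k q S Out \<sigma> \<longleftrightarrow>
     (\<exists>P. (alg2_step V d k q)\<^sup>*\<^sup>* (V, {}) (P, S) \<and>
          \<not> (P \<noteq> {} \<and> card S < k) \<and> Out = P) \<and>
     (\<forall>i\<in>V - Out. \<sigma> i \<in> S \<and> (\<forall>h\<in>S. d i (\<sigma> i) \<le> d i h))"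

end

theory Submission
  imports Defs "HOL-Library.Disjoint_Sets"
begin

text \<open>Write \<open>N i = NR V d k q i\<close> and \<open>m = nr_rank V k q\<close>; the closed ball of radius \<open>N s\<close>
  around any point \<open>s\<close> contains at least \<open>m\<close> points. Along the run of Algorithm 2 every
  remaining point \<open>p\<close> is farther than \<open>2 N p\<close> from all chosen centres, and \<open>N\<close> of a centre
  is at most \<open>N\<close> of every point still remaining. Hence the balls of radius \<open>N s\<close> around the
  centres are pairwise disjoint (triangle inequality) and contain no outlier. If the
  algorithm stops with outliers left, it has chosen \<open>k\<close> centres, so
  \<open>k m + |O| \<le> n\<close>, while \<open>n - q \<le> k m\<close> by the choice of \<open>m\<close>; thus \<open>|O| \<le> q\<close>.\<close>

definition cball_in :: "'a set \<Rightarrow> ('a \<Rightarrow> 'a \<Rightarrow> real) \<Rightarrow> 'a \<Rightarrow> real \<Rightarrow> 'a set" where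
  "cball_in V d x r = {y \<in> V. d x y \<le> r}"

lemma cball_in_disjoint:
  assumes "is_metric_on V d" "x \<in> V" "x' \<in> V" "r + r' < d x x'"
  shows "cball_in V d x r \<inter> cball_in V d x' r' = {}"
proof -
  have "False" if "y \<in> V" "d x y \<le> r" "d x' y \<le> r'" for y
  proof -
    have "d x x' \<le> d x y + d y x'"
      using assms(1-3) \<open>y \<in> V\<close> unfolding is_metric_on_def by blast
    also have "\<dots> = d x y + d x' y"
      using assms(1,3) \<open>y \<in> V\<close> unfolding is_metric_on_def by simp
    finally show False using that assms(4) by linarith
  qed
  then show ?thesis unfolding cball_in_def by blast
qed

lemma sorted_length_filter_le_nth:
  fixes xs :: "'a :: linorder list"
  assumes "sorted xs" "0 < m" "m \<le> length xs"
  shows "m \<le> length (filter (\<lambda>y. y \<le> xs ! (m - 1)) xs)"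
proof -
  have "{..<m} \<subseteq> {i. i < length xs \<and> xs ! i \<le> xs ! (m - 1)}"
    using assms by (auto intro: sorted_nth_mono)
  then have "card {..<m} \<le> card {i. i < length xs \<and> xs ! i \<le> xs ! (m - 1)}"
    by (intro card_mono) auto
  then show ?thesis by (simp add: length_filter_conv_card)
qed

lemma nr_rank_le_card:
  assumes "k \<ge> 1"
  shows "nr_rank V k q \<le> card V"
proof -
  have "real (card V) - real q \<le> real (card V) * real k"
    using assms by (simp add: order_trans[OF _ mult_left_mono[of 1 "real k"]])
  then have "(real (card V) - real q) / real k \<le> real (card V)"
    using assms by (simp add: divide_le_eq)
  then show ?thesis
    unfolding nr_rank_def by (simp add: ceiling_le_iff nat_le_iff)
qed

lemma card_le_nr_rank:
  assumes "k \<ge> 1"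
  shows "card V \<le> k * nr_rank V k q + q"
proof -
  have "(real (card V) - real q) / real k \<le> real (nr_rank V k q)"
    unfolding nr_rank_def by linarith
  then have "real (card V) - real q \<le> real k * real (nr_rank V k q)"
    using assms by (simp add: divide_le_eq mult.commute)
  then have "real (card V) \<le> real (k * nr_rank V k q + q)"
    by simp
  then show ?thesis
    by (simp only: of_nat_le_iff)
qed

lemma nr_rank_le_card_cball_in:
  assumes "finite V" "k \<ge> 1"
  shows "nr_rank V k q \<le> card (cball_in V d s (NR V d k q s))"
proof (cases "nr_rank V k q = 0")
  case False
  define xs where "xs = sorted_list_of_multiset (image_mset (d s) (mset_set V))"
  let ?r = "xs ! (nr_rank V k q - 1)"
  have "length xs = card V"
    unfolding xs_def by (metis mset_sorted_list_of_multiset size_image_mset size_mset size_mset_set)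
  then have "nr_rank V k q \<le> length (filter (\<lambda>y. y \<le> ?r) xs)"
    using False nr_rank_le_card[OF assms(2)]
    by (intro sorted_length_filter_le_nth) (auto simp: xs_def)
  also have "\<dots> = size (filter_mset (\<lambda>y. y \<le> ?r) (image_mset (d s) (mset_set V)))"
    by (metis mset_filter size_mset mset_sorted_list_of_multiset xs_def)
  also have "\<dots> = card (cball_in V d s ?r)"
    using assms(1) by (simp add: cball_in_def filter_mset_image_mset filter_mset_mset_set)
  finally show ?thesis unfolding xs_def NR_def .
qed simp

lemma card_disjoint_family_plus_card_le:
  assumes "finite V" "finite S" "Out \<subseteq> V" "disjoint_family_on B S"
    and "\<And>s. s \<in> S \<Longrightarrow> B s \<subseteq> V - Out" "\<And>s. s \<in> S \<Longrightarrow> m \<le> card (B s)"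
  shows "card S * m + card Out \<le> card V"
proof -
  have fin: "finite (B s)" if "s \<in> S" for s
    using assms(1,5) that by (meson finite_Diff finite_subset)
  have "card S * m \<le> (\<Sum>s\<in>S. card (B s))"
    using sum_mono[OF assms(6)] by simp
  also have "\<dots> = card (\<Union>s\<in>S. B s)"
    using card_UN_disjoint'[OF assms(4) fin assms(2)] by simp
  also have "\<dots> \<le> card (V - Out)"
    using assms(1,5) by (intro card_mono) auto
  also have "\<dots> = card V - card Out"
    using assms(1,3) by (simp add: card_Diff_subset finite_subset)
  finally show ?thesis
    using card_mono[OF assms(1,3)] by linarith
qed

definition alg2_invariant :: "'a set \<Rightarrow> ('a \<Rightarrow> 'a \<Rightarrow> real) \<Rightarrow> nat \<Rightarrow> nat \<Rightarrow>
    'a set \<times> 'a set \<Rightarrow> bool" where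
  "alg2_invariant V d k q = (\<lambda>(P, S).
     finite S \<and> S \<subseteq> V \<and> P \<subseteq> V \<and> card S \<le> k \<and>
     (\<forall>s\<in>S. \<forall>p\<in>P. 2 * NR V d k q p < d p s \<and> NR V d k q s \<le> NR V d k q p) \<and>
     disjoint_family_on (\<lambda>s. cball_in V d s (NR V d k q s)) S)"

lemma alg2_invariant_init: "alg2_invariant V d k q (V, {})"
  unfolding alg2_invariant_def by (simp add: disjoint_family_on_def)

lemma alg2_invariant_step:
  assumes "is_metric_on V d" "alg2_invariant V d k q (P, S)" "alg2_step V d k q (P, S) st'"
  shows "alg2_invariant V d k q st'"
proof -
  let ?N = "NR V d k q" and ?B = "\<lambda>s. cball_in V d s (NR V d k q s)"
  obtain s where s: "s \<in> P" "\<forall>i\<in>P. ?N s \<le> ?N i" "card S < k"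
      "st' = ({i\<in>P. 2 * ?N i < d i s}, insert s S)"
    using assms(3) unfolding alg2_step_def by auto
  have inv: "finite S" "S \<subseteq> V" "P \<subseteq> V"
      "\<forall>t\<in>S. \<forall>p\<in>P. 2 * ?N p < d p t \<and> ?N t \<le> ?N p" "disjoint_family_on ?B S"
    using assms(2) unfolding alg2_invariant_def by auto
  have "?B s \<inter> ?B t = {}" if "t \<in> S" for t
  proof -
    have "?N t + ?N s < d s t"
      using inv(4) that \<open>s \<in> P\<close> by fastforce
    then show ?thesis
      using cball_in_disjoint[OF assms(1)] inv(2,3) that \<open>s \<in> P\<close> by (simp add: add.commute subsetD)
  qed
  then have "disjoint_family_on ?B (insert s S)"
    using inv(5) unfolding disjoint_family_on_def by blast
  moreover have "card (insert s S) \<le> k"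
    using inv(1) s(3) by (simp add: card_insert_if)
  ultimately show ?thesis
    using s inv unfolding alg2_invariant_def by auto
qed

lemma alg2_invariant_reachable:
  assumes "is_metric_on V d" "(alg2_step V d k q)\<^sup>*\<^sup>* (V, {}) st"
  shows "alg2_invariant V d k q st"
  using assms(2)
proof (induction rule: rtranclp_induct)
  case base
  show ?case by (rule alg2_invariant_init)
next
  case (step st st')
  then show ?case
    using alg2_invariant_step[OF assms(1)] by (metis prod.exhaust)
qed

lemma alg2_invariant_cball_in_subset:
  assumes "is_metric_on V d" "alg2_invariant V d k q (P, S)" "s \<in> S"
  shows "cball_in V d s (NR V d k q s) \<subseteq> V - P"
proof
  fix p assume p: "p \<in> cball_in V d s (NR V d k q s)"
  have "s \<in> V" "p \<in> V"
    using assms(2,3) p unfolding alg2_invariant_def cball_in_def by auto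
  then have "0 \<le> d s p" "d p s = d s p"
    using assms(1) unfolding is_metric_on_def by auto
  moreover have "d s p \<le> NR V d k q s"
    using p unfolding cball_in_def by simp
  moreover have "p \<in> P \<Longrightarrow> 2 * NR V d k q p < d p s \<and> NR V d k q s \<le> NR V d k q p"
    using assms(2,3) unfolding alg2_invariant_def by auto
  ultimately show "p \<in> V - P"
    using \<open>p \<in> V\<close> by fastforce
qed

theorem lemma2:
  fixes V :: "'a set" and d :: "'a \<Rightarrow> 'a \<Rightarrow> real" and k q :: nat
    and S Out :: "'a set" and \<sigma> :: "'a \<Rightarrow> 'a"
  assumes "finite V"
    and "is_metric_on V d"
    and "k \<ge> 1"
    and "alg2_output V d k q S Out \<sigma>"
  shows "card S \<le> k \<and> card Out \<le> q"
proof -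
  obtain P where run: "(alg2_step V d k q)\<^sup>*\<^sup>* (V, {}) (P, S)"
      and stop: "P = {} \<or> card S \<ge> k" and "Out = P"
    using assms(4) unfolding alg2_output_def by auto
  have inv: "alg2_invariant V d k q (P, S)"
    using alg2_invariant_reachable[OF assms(2) run] .
  then have S: "finite S" "card S \<le> k" "P \<subseteq> V"
    unfolding alg2_invariant_def by auto
  have "card P \<le> q"
  proof (cases "P = {}")
    case False
    have "disjoint_family_on (\<lambda>s. cball_in V d s (NR V d k q s)) S"
      using inv unfolding alg2_invariant_def by simp
    then have "card S * nr_rank V k q + card P \<le> card V"
      using alg2_invariant_cball_in_subset[OF assms(2) inv] nr_rank_le_card_cball_in[OF assms(1,3)]
      by (rule card_disjoint_family_plus_card_le[OF assms(1) S(1,3)])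
    then show ?thesis
      using card_le_nr_rank[OF assms(3), of V q] stop False S(2) by simp
  qed simp
  then show ?thesis
    using S(2) \<open>Out = P\<close> by simp
qed

end
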